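(* Let $X$ be a locally path connected space and let $A\subseteq X$ be a closed, path connected subset such that every point of $A$ has a countable local base in $X$. Let $p:X\to X/A$ be the quotient map and $*=p(A)$. Then for every $a\in A$, $\overline{p_*\pi_1^{top}(X,a)}=\pi_1^{top}(X/A,* )$.
   Context: For $A\subseteq X$, $X/A$ denotes the quotient space obtained by collapsing $A$ to a single point $*$, with quotient map $p$. For a pointed space $(X,x)$, the topological fundamental group $\pi_1^{top}(X,x)$ is $\pi_1(X,x)$ with the quotient topology with respect to the canonical surjection from the loop space $\Omega(X,x)$ (based loops $[0,1]\to X$ with the compact-open topology) onto $\pi_1(X,x)$; $p_*$ is the induced continuous homomorphism. *)

theory Defs
  imports "HOL-Analysis.Analysis"
begin

definition quotient_topology :: "'a topology \<Rightarrow> ('a \<Rightarrow> 'b) \<Rightarrow> 'b topology" where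
  "quotient_topology X f =
     topology (\<lambda>U. U \<subseteq> f ` topspace X \<and> openin X {x \<in> topspace X. f x \<in> U})"

(* The quotient map X \<rightarrow> X/A collapsing A to the single point A (the point * ) *)
definition collapse_map :: "'a set \<Rightarrow> 'a \<Rightarrow> 'a set" where
  "collapse_map A x = (if x \<in> A then A else {x})"

definition collapse_space :: "'a topology \<Rightarrow> 'a set \<Rightarrow> 'a set topology" where
  "collapse_space X A = quotient_topology X (collapse_map A)"

definition countable_local_base_at :: "'a topology \<Rightarrow> 'a \<Rightarrow> bool" where
  "countable_local_base_at X a \<longleftrightarrow>
     (\<exists>\<B>. countable \<B> \<and> (\<forall>V\<in>\<B>. openin X V \<and> a \<in> V) \<and>
          (\<forall>U. openin X U \<and> a \<in> U \<longrightarrow> (\<exists>V\<in>\<B>. V \<subseteq> U)))"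

definition loops :: "'a topology \<Rightarrow> 'a \<Rightarrow> (real \<Rightarrow> 'a) set" where
  "loops X x = {g. pathin X g \<and> g 0 = x \<and> g 1 = x}"

definition loop_space_top :: "'a topology \<Rightarrow> 'a \<Rightarrow> (real \<Rightarrow> 'a) topology" where
  "loop_space_top X x = topology_generated_by
     {{g \<in> loops X x. g ` K \<subseteq> U} | K U. compactin (top_of_set {0..1}) K \<and> openin X U}"

definition path_homotopic :: "'a topology \<Rightarrow> (real \<Rightarrow> 'a) \<Rightarrow> (real \<Rightarrow> 'a) \<Rightarrow> bool" where
  "path_homotopic X g h \<longleftrightarrow>
     homotopic_with (\<lambda>k. k 0 = g 0 \<and> k 1 = g 1) (top_of_set {0..1}) X g h"

definition loop_class :: "'a topology \<Rightarrow> 'a \<Rightarrow> (real \<Rightarrow> 'a) \<Rightarrow> (real \<Rightarrow> 'a) set" where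
  "loop_class X x g = {h \<in> loops X x. path_homotopic X g h}"

definition pi1_top :: "'a topology \<Rightarrow> 'a \<Rightarrow> (real \<Rightarrow> 'a) set topology" where
  "pi1_top X x = quotient_topology (loop_space_top X x) (loop_class X x)"

end

theory Submission
  imports Defs
begin

(* A basic neighbourhood of a loop h at * in the compact-open topology is given by finitely
   many conditions h(K_i) subset U_i. Subdivide [0,1] into dyadic intervals so fine that every
   interval meeting K_i is mapped into U_i. For an open set V of X/A, the path components of
   the preimage of V are open and saturated, because the path connected set A lies in a single
   one of them; hence the connected image of a path in V forces any two preimages of its
   endpoints to be joined by a path in X staying over V. Doing this on each dyadic interval and
   concatenating yields a loop g at a with p o g in the given neighbourhood. So the loops p o g
   are dense in the loop space, and their classes are dense in the quotient group. *)

lemma openin_quotient_topology: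
  "openin (quotient_topology X f) U \<longleftrightarrow>
     U \<subseteq> f ` topspace X \<and> openin X {x \<in> topspace X. f x \<in> U}"
proof -
  have "istopology (\<lambda>U. U \<subseteq> f ` topspace X \<and> openin X {x \<in> topspace X. f x \<in> U})"
    unfolding istopology_def
  proof (intro conjI allI impI)
    fix S T assume "S \<subseteq> f ` topspace X \<and> openin X {x \<in> topspace X. f x \<in> S}"
      and "T \<subseteq> f ` topspace X \<and> openin X {x \<in> topspace X. f x \<in> T}"
    moreover have "{x \<in> topspace X. f x \<in> S \<inter> T} =
        {x \<in> topspace X. f x \<in> S} \<inter> {x \<in> topspace X. f x \<in> T}" by blast
    ultimately show "S \<inter> T \<subseteq> f ` topspace X" "openin X {x \<in> topspace X. f x \<in> S \<inter> T}"
      by auto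
  next
    fix K assume "\<forall>S\<in>K. S \<subseteq> f ` topspace X \<and> openin X {x \<in> topspace X. f x \<in> S}"
    moreover have "{x \<in> topspace X. f x \<in> \<Union>K} = (\<Union>S\<in>K. {x \<in> topspace X. f x \<in> S})" by auto
    ultimately show "\<Union>K \<subseteq> f ` topspace X" "openin X {x \<in> topspace X. f x \<in> \<Union>K}"
      by auto
  qed
  then show ?thesis unfolding quotient_topology_def by simp
qed

lemma topspace_quotient_topology: "topspace (quotient_topology X f) = f ` topspace X"
proof -
  have "openin (quotient_topology X f) (f ` topspace X)"
  proof -
    have "{x \<in> topspace X. f x \<in> f ` topspace X} = topspace X" by blast
    then show ?thesis unfolding openin_quotient_topology by simp
  qed
  moreover have "\<And>U. openin (quotient_topology X f) U \<Longrightarrow> U \<subseteq> f ` topspace X"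
    unfolding openin_quotient_topology by auto
  ultimately show ?thesis unfolding topspace_def by blast
qed

lemma continuous_map_quotient_topology: "continuous_map X (quotient_topology X f) f"
  unfolding continuous_map_def topspace_quotient_topology openin_quotient_topology by auto

lemma closure_of_quotient_topology_image:
  assumes "X closure_of D = topspace X"
  shows "quotient_topology X f closure_of (f ` D) = topspace (quotient_topology X f)"
  unfolding dense_intersects_open
proof (intro allI impI)
  fix T assume "openin (quotient_topology X f) T \<and> T \<noteq> {}"
  then have "openin X {x \<in> topspace X. f x \<in> T}" "{x \<in> topspace X. f x \<in> T} \<noteq> {}"
    unfolding openin_quotient_topology by auto
  then have "D \<inter> {x \<in> topspace X. f x \<in> T} \<noteq> {}"
    using assms unfolding dense_intersects_open by blast
  then show "f ` D \<inter> T \<noteq> {}" by blast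
qed

definition saturated :: "'a topology \<Rightarrow> ('a \<Rightarrow> 'b) \<Rightarrow> 'a set \<Rightarrow> bool" where
  "saturated X f S \<longleftrightarrow> S \<subseteq> topspace X \<and> (\<forall>x\<in>S. \<forall>y\<in>topspace X. f y = f x \<longrightarrow> y \<in> S)"

lemma saturated_preimage: "saturated X f {x \<in> topspace X. f x \<in> U}"
  unfolding saturated_def by auto

lemma saturated_Diff:
  assumes "saturated X f S" "saturated X f T"
  shows "saturated X f (S - T)"
  unfolding saturated_def
proof (intro conjI ballI impI)
  show "S - T \<subseteq> topspace X" using assms(1) unfolding saturated_def by blast
  fix x y assume x: "x \<in> S - T" and y: "y \<in> topspace X" "f y = f x"
  then have "x \<in> topspace X" using assms(1) unfolding saturated_def by blast
  moreover have "y \<in> S" using assms(1) x y unfolding saturated_def by blast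
  ultimately show "y \<in> S - T" using assms(2) x y unfolding saturated_def by force
qed

lemma saturated_imageD: "saturated X f S \<Longrightarrow> x \<in> topspace X \<Longrightarrow> f x \<in> f ` S \<Longrightarrow> x \<in> S"
  unfolding saturated_def by auto

lemma openin_quotient_topology_image:
  assumes "openin X S" "saturated X f S"
  shows "openin (quotient_topology X f) (f ` S)"
proof -
  have "{x \<in> topspace X. f x \<in> f ` S} = S"
    using assms(2) saturated_imageD unfolding saturated_def by blast
  then show ?thesis
    using assms openin_subset unfolding openin_quotient_topology by fastforce
qed

lemma collapse_map_eq_iff:
  "collapse_map A x = collapse_map A y \<longleftrightarrow> x = y \<or> (x \<in> A \<and> y \<in> A)"
  unfolding collapse_map_def by auto

lemma saturated_path_component_of_collapse:
  assumes A: "path_connectedin X A" and W: "saturated X (collapse_map A) W"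
  shows "saturated X (collapse_map A) (Collect (path_component_of (subtopology X W) x))"
    (is "saturated X ?p ?C")
  unfolding saturated_def
proof (intro conjI ballI impI)
  show "?C \<subseteq> topspace X"
    using W path_component_of_subset_topspace unfolding saturated_def by fastforce
  fix u v assume u: "u \<in> ?C" and v: "v \<in> topspace X" "?p v = ?p u"
  have uW: "u \<in> W" using u path_component_of_subset_topspace by fastforce
  show "v \<in> ?C"
  proof (cases "v = u")
    case False
    then have "u \<in> A" "v \<in> A" using v(2) collapse_map_eq_iff by metis+
    have "A \<subseteq> W"
    proof
      fix z assume "z \<in> A"
      then have "?p z = ?p u" using \<open>u \<in> A\<close> collapse_map_eq_iff by metis
      then show "z \<in> W"
        using W uW \<open>z \<in> A\<close> A path_connectedin_subset_topspace unfolding saturated_def by blast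
    qed
    then have "path_component_of (subtopology X W) u v"
      using A \<open>u \<in> A\<close> \<open>v \<in> A\<close> path_connectedin_subtopology unfolding path_component_of by blast
    then show ?thesis using u path_component_of_trans by fastforce
  qed (use u in simp)
qed

lemma path_component_of_collapse_preimage:
  assumes lpc: "locally_path_connected_space X" and A: "path_connectedin X A"
    and V: "openin (collapse_space X A) V"
    and h: "pathin (collapse_space X A) h" "h ` {0..1} \<subseteq> V"
    and x: "x0 \<in> topspace X" "x1 \<in> topspace X"
      "collapse_map A x0 = h 0" "collapse_map A x1 = h 1"
  shows "path_component_of (subtopology X {x \<in> topspace X. collapse_map A x \<in> V}) x0 x1"
proof -
  let ?p = "collapse_map A"
  let ?Y = "collapse_space X A"
  define W where "W = {x \<in> topspace X. ?p x \<in> V}"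
  define C where "C = Collect (path_component_of (subtopology X W) x0)"
  have VW: "V \<subseteq> ?p ` W" and oW: "openin X W"
    using V unfolding W_def collapse_space_def openin_quotient_topology by auto
  have WX: "W \<subseteq> topspace X" unfolding W_def by blast
  have sW: "saturated X ?p W" unfolding W_def by (rule saturated_preimage)
  have x0W: "x0 \<in> W" using h x unfolding W_def by auto
  have sC: "saturated X ?p C" unfolding C_def using A sW by (rule saturated_path_component_of_collapse)
  have sWC: "saturated X ?p (W - C)" using sW sC by (rule saturated_Diff)
  have lpcW: "locally_path_connected_space (subtopology X W)"
    using lpc oW by (rule locally_path_connected_space_open_subset)
  have "openin (subtopology X W) C" "closedin (subtopology X W) C"
    unfolding C_def using lpcW
    by (simp_all add: openin_path_component_of_locally_path_connected_space
        closedin_path_component_of_locally_path_connected_space)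
  moreover have "topspace (subtopology X W) = W"
    using openin_subset[OF oW] by auto
  ultimately have "openin X C" "openin X (W - C)"
    using oW openin_trans_full unfolding closedin_def by metis+
  then have oC: "openin ?Y (?p ` C)" and oWC: "openin ?Y (?p ` (W - C))"
    unfolding collapse_space_def using sC sWC openin_quotient_topology_image by blast+
  have CW: "C \<subseteq> W"
    unfolding C_def using path_component_of_subset_topspace by fastforce
  have cover: "h ` {0..1} \<subseteq> ?p ` C \<union> ?p ` (W - C)"
    using subset_trans[OF h(2) VW] Diff_partition[OF CW] by (metis image_Un)
  have disjoint: "?p ` C \<inter> ?p ` (W - C) = {}"
    using saturated_imageD[OF sC] WX by blast
  have "x0 \<in> C"
    using x0W x(1) unfolding C_def by (simp add: path_component_of_refl)
  then have "h 0 \<in> ?p ` C \<inter> h ` {0..1}" using x(3) by (simp add: rev_image_eqI)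
  then have avoid: "?p ` (W - C) \<inter> h ` {0..1} = {}"
    using connectedinD[OF connectedin_path_image[OF h(1)] oC oWC cover] disjoint by blast
  have h1: "h 1 \<in> h ` {0..1}" by simp
  then have "h 1 \<in> ?p ` C \<union> ?p ` (W - C)" using cover by (rule subsetD[rotated])
  then have "h 1 \<in> ?p ` C" using avoid h1 by (meson UnE disjoint_iff)
  then have "x1 \<in> C" using sC x(2,4) by (simp add: saturated_imageD)
  then show ?thesis unfolding C_def W_def by simp
qed

definition dyadic_interval :: "nat \<Rightarrow> nat \<Rightarrow> real set" where
  "dyadic_interval k j = {t \<in> {0..1}. real j \<le> 2^k * t \<and> 2^k * t \<le> real j + 1}"

lemma dyadic_interval_0: "dyadic_interval 0 0 = {0..1}"
  unfolding dyadic_interval_def by auto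

lemma dyadic_interval_half_left:
  "t \<in> dyadic_interval k j \<Longrightarrow> t / 2 \<in> dyadic_interval (Suc k) j"
  unfolding dyadic_interval_def by auto

lemma dyadic_interval_half_right:
  "t \<in> dyadic_interval k j \<Longrightarrow> (t + 1) / 2 \<in> dyadic_interval (Suc k) (j + 2^k)"
  unfolding dyadic_interval_def by (auto simp: algebra_simps)

lemma dyadic_interval_SucE:
  assumes t: "t \<in> dyadic_interval (Suc k) j"
  obtains "j < 2^k" "t \<le> 1/2" "2 * t \<in> dyadic_interval k j"
    | "2^k \<le> j" "1/2 \<le> t" "2 * t - 1 \<in> dyadic_interval k (j - 2^k)"
proof -
  have t01: "0 \<le> t" "t \<le> 1" and lo: "real j \<le> 2^k * (2 * t)" and hi: "2^k * (2 * t) \<le> real j + 1"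
    using t unfolding dyadic_interval_def by (simp_all add: ac_simps)
  show ?thesis
  proof (cases "j < 2^k")
    case True
    then have "real j + 1 \<le> 2^k"
      by (metis Suc_leI add.commute of_nat_Suc of_nat_le_iff of_nat_numeral of_nat_power)
    then have "2^k * (2 * t) \<le> 2^k * 1" using hi by linarith
    then have "2 * t \<le> 1" by (simp add: mult_le_cancel_left_pos)
    then show ?thesis
      using that(1) True t01 lo hi unfolding dyadic_interval_def by simp
  next
    case False
    then have "(2::real)^k \<le> real j"
      by (metis not_less of_nat_le_iff of_nat_numeral of_nat_power)
    then have "2^k * 1 \<le> 2^k * (2 * t)" using lo by linarith
    then have "1 \<le> 2 * t" by (simp add: mult_le_cancel_left_pos)
    moreover have "real (j - 2^k) = real j - 2^k" using False by (simp add: of_nat_diff)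
    ultimately show ?thesis
      using that(2) False t01 lo hi unfolding dyadic_interval_def by (simp add: algebra_simps)
  qed
qed

lemma dyadic_interval_cover:
  assumes t: "t \<in> {0..1}"
  shows "\<exists>j<2^k. t \<in> dyadic_interval k j"
proof (cases "t = 1")
  case True
  then have "t \<in> dyadic_interval k (2^k - 1)"
    unfolding dyadic_interval_def by (simp add: of_nat_diff)
  then show ?thesis by (intro exI[of _ "2^k - 1"]) simp
next
  case False
  define j where "j = nat \<lfloor>2^k * t\<rfloor>"
  have rj: "real j = of_int \<lfloor>2^k * t\<rfloor>" unfolding j_def using t by simp
  have "2^k * t < 2^k" using t False by simp
  then have "real j < 2^k" using rj of_int_floor_le[of "2^k * t"] by linarith
  then have "j < 2^k" by (metis of_nat_less_iff of_nat_numeral of_nat_power)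
  moreover have "t \<in> dyadic_interval k j"
    using t rj of_int_floor_le[of "2^k * t"] real_of_int_floor_add_one_ge[of "2^k * t"]
    unfolding dyadic_interval_def by simp
  ultimately show ?thesis by blast
qed

lemma dyadic_interval_dist:
  assumes "s \<in> dyadic_interval k j" "t \<in> dyadic_interval k j"
  shows "\<bar>s - t\<bar> \<le> (1/2)^k"
proof -
  have "\<bar>2^k * s - 2^k * t\<bar> \<le> 1"
    using assms unfolding dyadic_interval_def abs_le_iff by auto
  then have "2^k * \<bar>s - t\<bar> \<le> 1" by (simp add: abs_mult flip: right_diff_distrib)
  then show ?thesis by (simp add: power_one_over pos_le_divide_eq mult.commute)
qed

definition join_path :: "(real \<Rightarrow> 'a) \<Rightarrow> (real \<Rightarrow> 'a) \<Rightarrow> real \<Rightarrow> 'a" where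
  "join_path g1 g2 = (\<lambda>t. if t \<le> 1/2 then g1 (2 * t) else g2 (2 * t - 1))"

lemma join_path_left: "t \<le> 1/2 \<Longrightarrow> join_path g1 g2 t = g1 (2 * t)"
  unfolding join_path_def by simp

lemma join_path_right:
  assumes "g2 0 = g1 1" "1/2 \<le> t"
  shows "join_path g1 g2 t = g2 (2 * t - 1)"
proof (cases "t = 1/2")
  case True
  then show ?thesis using assms(1) unfolding join_path_def True by simp
qed (use assms(2) in \<open>simp add: join_path_def\<close>)

lemma pathin_join_path:
  assumes "pathin X g1" "pathin X g2" "g2 0 = g1 1"
  shows "pathin X (join_path g1 g2)"
  unfolding pathin_def join_path_def
proof (intro continuous_map_cases_le)
  let ?I = "top_of_set {0..1::real}"
  have g1: "continuous_map ?I X g1" and g2: "continuous_map ?I X g2"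
    using assms unfolding pathin_def by auto
  have "continuous_map (subtopology ?I {t \<in> topspace ?I. t \<le> 1/2}) ?I (\<lambda>t. 2 * t)"
    by (auto simp: continuous_map_in_subtopology continuous_map_from_subtopology)
  then show "continuous_map (subtopology ?I {t \<in> topspace ?I. t \<le> 1/2}) X (\<lambda>t. g1 (2 * t))"
    using continuous_map_compose[OF _ g1] by (simp add: o_def)
  have "continuous_map (subtopology ?I {t \<in> topspace ?I. 1/2 \<le> t}) euclideanreal (\<lambda>t. 2 * t - 1)"
    by (intro continuous_intros) (force intro: continuous_map_from_subtopology)
  then have "continuous_map (subtopology ?I {t \<in> topspace ?I. 1/2 \<le> t}) ?I (\<lambda>t. 2 * t - 1)"
    by (force simp: continuous_map_in_subtopology)
  then show "continuous_map (subtopology ?I {t \<in> topspace ?I. 1/2 \<le> t}) X (\<lambda>t. g2 (2 * t - 1))"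
    using continuous_map_compose[OF _ g2] by (simp add: o_def)
  show "g1 (2 * t) = g2 (2 * t - 1)" if "t = 1/2" for t
    using assms(3) unfolding that by simp
qed auto

lemma pathin_half:
  assumes "pathin X h" "c \<in> {0..1}"
  shows "pathin X (\<lambda>s. h ((s + c) / 2))"
proof -
  have "continuous_map euclideanreal euclideanreal (\<lambda>s::real. (s + c) / 2)"
    by (intro continuous_intros) auto
  then have "continuous_map (top_of_set {0..1}) euclideanreal (\<lambda>s. (s + c) / 2)"
    by (rule continuous_map_from_subtopology)
  moreover have "(\<lambda>s. (s + c) / 2) ` {0..1} \<subseteq> {0..1}" using assms(2) by auto
  ultimately have "continuous_map (top_of_set {0..1}) (top_of_set {0..1}) (\<lambda>s. (s + c) / 2)"
    by (simp add: continuous_map_in_subtopology image_subset_iff_funcset)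
  then show ?thesis
    using assms(1) continuous_map_compose unfolding pathin_def o_def by blast
qed

(* Induction on k: bisect h at 1/2, approximate both halves through a point over h(1/2),
   and join the two paths. *)
lemma collapse_path_dyadic_approx:
  assumes lpc: "locally_path_connected_space X" and A: "path_connectedin X A"
    and "pathin (collapse_space X A) h"
    and "\<And>j. j < 2^k \<Longrightarrow> openin (collapse_space X A) (V j) \<and> h ` dyadic_interval k j \<subseteq> V j"
    and "x0 \<in> topspace X" "x1 \<in> topspace X"
    and "collapse_map A x0 = h 0" "collapse_map A x1 = h 1"
  shows "\<exists>g. pathin X g \<and> g 0 = x0 \<and> g 1 = x1 \<and>
           (\<forall>j<2^k. (collapse_map A \<circ> g) ` dyadic_interval k j \<subseteq> V j)"
  using assms(3-)
proof (induction k arbitrary: h V x0 x1)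
  case 0
  then have "openin (collapse_space X A) (V 0)" "h ` {0..1} \<subseteq> V 0"
    by (auto simp: dyadic_interval_0)
  from path_component_of_collapse_preimage[OF lpc A this(1) 0(1) this(2) 0(3-)]
  obtain g where "pathin X g" "g 0 = x0" "g 1 = x1" "(collapse_map A \<circ> g) ` {0..1} \<subseteq> V 0"
    unfolding path_component_of_def pathin_subtopology by (auto simp: image_subset_iff)
  then show ?case by (auto simp: dyadic_interval_0)
next
  case (Suc k)
  let ?p = "collapse_map A"
  have "h (1/2) \<in> topspace (collapse_space X A)"
    using Suc.prems(1) path_image_subset_topspace by fastforce
  then obtain xm where xm: "xm \<in> topspace X" "?p xm = h (1/2)"
    unfolding collapse_space_def topspace_quotient_topology by auto
  obtain gL where gL: "pathin X gL" "gL 0 = x0" "gL 1 = xm"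
      "\<forall>j<2^k. (?p \<circ> gL) ` dyadic_interval k j \<subseteq> V j"
  proof -
    have "pathin (collapse_space X A) (\<lambda>s. h ((s + 0) / 2))"
      using Suc.prems(1) by (rule pathin_half) simp
    moreover have "h ((s + 0) / 2) \<in> V j" if "j < 2^k" "s \<in> dyadic_interval k j" for j s
      using Suc.prems(2)[of j] that dyadic_interval_half_left by fastforce
    ultimately show ?thesis
      using Suc.IH[of "\<lambda>s. h ((s + 0) / 2)" V x0 xm] Suc.prems xm that by fastforce
  qed
  obtain gR where gR: "pathin X gR" "gR 0 = xm" "gR 1 = x1"
      "\<forall>j<2^k. (?p \<circ> gR) ` dyadic_interval k j \<subseteq> V (j + 2^k)"
  proof -
    have "pathin (collapse_space X A) (\<lambda>s. h ((s + 1) / 2))"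
      using Suc.prems(1) by (rule pathin_half) simp
    moreover have "h ((s + 1) / 2) \<in> V (j + 2^k)" if "j < 2^k" "s \<in> dyadic_interval k j" for j s
      using Suc.prems(2)[of "j + 2^k"] that dyadic_interval_half_right by fastforce
    ultimately show ?thesis
      using Suc.IH[of "\<lambda>s. h ((s + 1) / 2)" "\<lambda>j. V (j + 2^k)" xm x1] Suc.prems xm that
      by fastforce
  qed
  have "?p (join_path gL gR t) \<in> V j" if "j < 2^Suc k" "t \<in> dyadic_interval (Suc k) j" for j t
    using that(2)
  proof (cases rule: dyadic_interval_SucE)
    case 1
    then show ?thesis using gL(4) by (force simp: join_path_left)
  next
    case 2
    then have "j - 2^k < 2^k" using that(1) by simp
    then show ?thesis using gR(4) 2 gL(3) gR(2) by (force simp: join_path_right)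
  qed
  then show ?case
    using pathin_join_path[OF gL(1) gR(1)] gL gR by (auto simp: join_path_def)
qed

lemma continuous_map_compact_uniform_nbhd:
  fixes K :: "real set"
  assumes h: "continuous_map (top_of_set {0..1}) Y h"
    and K: "compact K" "K \<subseteq> {0..1}" and U: "openin Y U" "h ` K \<subseteq> U"
  shows "\<exists>d>0. \<forall>s\<in>{0..1}. \<forall>t\<in>K. \<bar>s - t\<bar> < d \<longrightarrow> h s \<in> U"
proof -
  have "openin (top_of_set {0..1}) {s \<in> {0..1}. h s \<in> U}"
    using openin_continuous_map_preimage[OF h U(1)] by simp
  then obtain G where G: "open G" "{s \<in> {0..1}. h s \<in> U} = {0..1} \<inter> G"
    by (auto simp: openin_open)
  have "K \<subseteq> G" using G(2) U(2) K(2) by blast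
  then obtain d where d: "d > 0" "(\<Union>t\<in>K. ball t d) \<subseteq> G"
    using compact_subset_open_imp_ball_epsilon_subset[OF K(1) G(1)] by blast
  have "h s \<in> U" if "s \<in> {0..1}" "t \<in> K" "\<bar>s - t\<bar> < d" for s t
  proof -
    have "s \<in> ball t d" using that(3) by (simp add: dist_real_def abs_minus_commute)
    then have "s \<in> G" using d(2) that(2) by blast
    then show ?thesis using G(2) that(1) by blast
  qed
  then show ?thesis using d(1) by blast
qed

lemma dyadic_interval_subordinate:
  assumes h: "continuous_map (top_of_set {0..1}) Y h" and I: "finite I"
    and KU: "\<And>i. i \<in> I \<Longrightarrow> compact (K i) \<and> K i \<subseteq> {0..1} \<and> openin Y (U i) \<and> h ` K i \<subseteq> U i"
  shows "\<exists>k. \<forall>i\<in>I. \<forall>j. dyadic_interval k j \<inter> K i \<noteq> {} \<longrightarrow> h ` dyadic_interval k j \<subseteq> U i"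
proof -
  have "\<forall>i\<in>I. \<exists>d>0. \<forall>s\<in>{0..1}. \<forall>t\<in>K i. \<bar>s - t\<bar> < d \<longrightarrow> h s \<in> U i"
    using KU by (blast intro: continuous_map_compact_uniform_nbhd[OF h])
  then obtain d where d: "\<forall>i\<in>I. d i > 0 \<and> (\<forall>s\<in>{0..1}. \<forall>t\<in>K i. \<bar>s - t\<bar> < d i \<longrightarrow> h s \<in> U i)"
    by (metis (no_types, lifting) bchoice)
  define \<delta> where "\<delta> = Min (insert 1 (d ` I))"
  have "\<delta> > 0" unfolding \<delta>_def using I d by auto
  then obtain k where k: "(1/2::real)^k < \<delta>" using real_arch_pow_inv[of \<delta> "1/2"] by auto
  have "h ` dyadic_interval k j \<subseteq> U i" if "i \<in> I" "t \<in> dyadic_interval k j" "t \<in> K i" for i j t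
  proof
    fix y assume "y \<in> h ` dyadic_interval k j"
    then obtain s where s: "s \<in> dyadic_interval k j" "y = h s" by blast
    have "\<delta> \<le> d i" unfolding \<delta>_def using I that(1) by simp
    then have "\<bar>s - t\<bar> < d i" using dyadic_interval_dist[OF s(1) that(2)] k by linarith
    moreover have "s \<in> {0..1}" using s(1) unfolding dyadic_interval_def by blast
    ultimately show "y \<in> U i" using d that(1,3) s(2) by blast
  qed
  then show ?thesis by blast
qed

lemma collapse_loop_approx:
  assumes lpc: "locally_path_connected_space X" and A: "path_connectedin X A" and "a \<in> A"
    and h: "h \<in> loops (collapse_space X A) (collapse_map A a)" and "finite I"
    and KU: "\<And>i. i \<in> I \<Longrightarrow> compact (K i) \<and> K i \<subseteq> {0..1} \<and>
               openin (collapse_space X A) (U i) \<and> h ` K i \<subseteq> U i"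
  obtains g where "g \<in> loops X a" "\<And>i. i \<in> I \<Longrightarrow> (collapse_map A \<circ> g) ` K i \<subseteq> U i"
proof -
  let ?Y = "collapse_space X A"
  have hY: "pathin ?Y h" "h 0 = collapse_map A a" "h 1 = collapse_map A a"
    using h unfolding loops_def by auto
  obtain k where k: "\<forall>i\<in>I. \<forall>j. dyadic_interval k j \<inter> K i \<noteq> {} \<longrightarrow>
                          h ` dyadic_interval k j \<subseteq> U i"
    using dyadic_interval_subordinate[where K = K and U = U, OF hY(1)[unfolded pathin_def] \<open>finite I\<close> KU]
    by blast
  define V where "V j = topspace ?Y \<inter> \<Inter>(U ` {i \<in> I. dyadic_interval k j \<inter> K i \<noteq> {}})" for j
  have oV: "openin ?Y (V j)" for j
    unfolding V_def using \<open>finite I\<close> KU by (intro openin_Int_Inter) auto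
  have hV: "h ` dyadic_interval k j \<subseteq> V j" for j
  proof -
    have "h ` dyadic_interval k j \<subseteq> topspace ?Y"
      using path_image_subset_topspace[OF hY(1)] unfolding dyadic_interval_def by blast
    moreover have "h ` dyadic_interval k j \<subseteq> U i"
      if "i \<in> I" "dyadic_interval k j \<inter> K i \<noteq> {}" for i
      using k that by blast
    ultimately show ?thesis unfolding V_def by blast
  qed
  have "a \<in> topspace X"
    using A \<open>a \<in> A\<close> path_connectedin_subset_topspace by blast
  then have "\<exists>g. pathin X g \<and> g 0 = a \<and> g 1 = a \<and>
               (\<forall>j<2^k. (collapse_map A \<circ> g) ` dyadic_interval k j \<subseteq> V j)"
    by (intro collapse_path_dyadic_approx[OF lpc A hY(1)]) (simp_all add: oV hV hY(2,3))
  then obtain g where g: "g \<in> loops X a"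
      and gV: "\<forall>j<2^k. (collapse_map A \<circ> g) ` dyadic_interval k j \<subseteq> V j"
    unfolding loops_def by blast
  have "(collapse_map A \<circ> g) ` K i \<subseteq> U i" if i: "i \<in> I" for i
  proof
    fix y assume "y \<in> (collapse_map A \<circ> g) ` K i"
    then obtain t where t: "t \<in> K i" "y = (collapse_map A \<circ> g) t" by blast
    have "t \<in> {0..1}" using KU[OF i] t(1) by blast
    then obtain j where j: "j < 2^k" "t \<in> dyadic_interval k j"
      using dyadic_interval_cover by blast
    then have "y \<in> V j" using gV t(2) by blast
    moreover have "U i \<in> U ` {i \<in> I. dyadic_interval k j \<inter> K i \<noteq> {}}"
      using i j(2) t(1) by blast
    ultimately show "y \<in> U i" unfolding V_def by blast
  qed
  with g show ?thesis by (rule that)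
qed

lemma topspace_loop_space_top: "topspace (loop_space_top X x) = loops X x"
proof -
  let ?S = "{{g \<in> loops X x. g ` K \<subseteq> U} | K U. compactin (top_of_set {0..1}) K \<and> openin X U}"
  have "loops X x \<in> ?S"
    by (intro CollectI exI[of _ "{}"] exI[of _ "topspace X"]) simp
  moreover have "s \<subseteq> loops X x" if "s \<in> ?S" for s using that by blast
  ultimately have "\<Union>?S = loops X x" by (intro antisym Union_least Union_upper)
  then show ?thesis unfolding loop_space_top_def by simp
qed

lemma generate_topology_on_finite_Inter_base:
  assumes "generate_topology_on S P" "x \<in> P"
  shows "\<exists>F. finite F \<and> F \<subseteq> S \<and> x \<in> \<Inter>F \<and> \<Inter>F \<subseteq> P"
  using assms
proof (induction arbitrary: x rule: generate_topology_on.induct)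
  case (Int a b)
  obtain Fa where Fa: "finite Fa" "Fa \<subseteq> S" "x \<in> \<Inter>Fa" "\<Inter>Fa \<subseteq> a"
    using Int.IH(1)[of x] Int.prems by blast
  obtain Fb where Fb: "finite Fb" "Fb \<subseteq> S" "x \<in> \<Inter>Fb" "\<Inter>Fb \<subseteq> b"
    using Int.IH(2)[of x] Int.prems by blast
  have "x \<in> \<Inter>(Fa \<union> Fb)" "\<Inter>(Fa \<union> Fb) \<subseteq> a \<inter> b"
    using Fa(3,4) Fb(3,4) by auto
  then show ?case using Fa(1,2) Fb(1,2) by (intro exI[of _ "Fa \<union> Fb"]) simp
next
  case (UN K)
  then obtain k where "k \<in> K" "x \<in> k" by blast
  then obtain F where F: "finite F" "F \<subseteq> S" "x \<in> \<Inter>F" "\<Inter>F \<subseteq> k"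
    using UN.IH[of k x] by blast
  then have "\<Inter>F \<subseteq> \<Union>K" using \<open>k \<in> K\<close> by blast
  then show ?case using F by blast
next
  case (Basis s)
  then show ?case by (intro exI[of _ "{s}"]) simp
qed simp

lemma loop_space_top_closure_of_collapse_loops:
  assumes lpc: "locally_path_connected_space X" and A: "path_connectedin X A" and "a \<in> A"
  shows "loop_space_top (collapse_space X A) (collapse_map A a) closure_of
           ((\<circ>) (collapse_map A) ` loops X a) =
         topspace (loop_space_top (collapse_space X A) (collapse_map A a))"
  unfolding dense_intersects_open
proof (intro allI impI, elim conjE)
  let ?Y = "collapse_space X A"
  let ?y = "collapse_map A a"
  let ?S = "{{g \<in> loops ?Y ?y. g ` K \<subseteq> U} | K U.
              compactin (top_of_set {0..1}) K \<and> openin ?Y U}"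
  fix P assume P: "openin (loop_space_top ?Y ?y) P" "P \<noteq> {}"
  then obtain h where "h \<in> P" by blast
  then have h: "h \<in> loops ?Y ?y"
    using openin_subset[OF P(1)] unfolding topspace_loop_space_top by blast
  have "generate_topology_on ?S P"
    using P(1) unfolding loop_space_top_def by (rule openin_topology_generated_by)
  then have "\<exists>F. finite F \<and> F \<subseteq> ?S \<and> h \<in> \<Inter>F \<and> \<Inter>F \<subseteq> P"
    using \<open>h \<in> P\<close> by (rule generate_topology_on_finite_Inter_base)
  then obtain F where F: "finite F" "F \<subseteq> ?S" "h \<in> \<Inter>F" "\<Inter>F \<subseteq> P"
    by (elim exE conjE) (rule that)
  have "\<forall>f\<in>F. \<exists>KU. f = {g \<in> loops ?Y ?y. g ` fst KU \<subseteq> snd KU} \<and>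
                     compactin (top_of_set {0..1}) (fst KU) \<and> openin ?Y (snd KU)"
  proof
    fix f assume "f \<in> F"
    then obtain K U where "f = {g \<in> loops ?Y ?y. g ` K \<subseteq> U}"
        "compactin (top_of_set {0..1}) K" "openin ?Y U"
      using F(2) by blast
    then show "\<exists>KU. f = {g \<in> loops ?Y ?y. g ` fst KU \<subseteq> snd KU} \<and>
                     compactin (top_of_set {0..1}) (fst KU) \<and> openin ?Y (snd KU)"
      by (intro exI[of _ "(K, U)"]) simp
  qed
  then obtain KU where KU: "\<forall>f\<in>F. f = {g \<in> loops ?Y ?y. g ` fst (KU f) \<subseteq> snd (KU f)} \<and>
                     compactin (top_of_set {0..1}) (fst (KU f)) \<and> openin ?Y (snd (KU f))"
    by (rule bchoice[elim_format]) blast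
  define K where "K f = fst (KU f)" for f
  define U where "U f = snd (KU f)" for f
  have f_eq: "f = {g \<in> loops ?Y ?y. g ` K f \<subseteq> U f}" if "f \<in> F" for f
    using KU that unfolding K_def U_def by blast
  have "compact (K f) \<and> K f \<subseteq> {0..1} \<and> openin ?Y (U f) \<and> h ` K f \<subseteq> U f" if "f \<in> F" for f
  proof -
    have "h \<in> f" using F(3) that by blast
    then have "h ` K f \<subseteq> U f" using f_eq[OF that] by blast
    then show ?thesis
      using KU that unfolding K_def U_def by (simp add: compactin_subtopology)
  qed
  then obtain g where g: "g \<in> loops X a" "\<And>f. f \<in> F \<Longrightarrow> (collapse_map A \<circ> g) ` K f \<subseteq> U f"
    using collapse_loop_approx[OF lpc A \<open>a \<in> A\<close> h \<open>finite F\<close>] by blast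
  have pg: "collapse_map A \<circ> g \<in> loops ?Y ?y"
    using g(1) pathin_compose[OF _ continuous_map_quotient_topology]
    unfolding loops_def collapse_space_def by auto
  have "collapse_map A \<circ> g \<in> f" if "f \<in> F" for f
    using pg g(2)[OF that] f_eq[OF that] by blast
  then have "collapse_map A \<circ> g \<in> P" using F(4) by blast
  then show "(\<circ>) (collapse_map A) ` loops X a \<inter> P \<noteq> {}" using g(1) by blast
qed

theorem theorem3p11:
  fixes X :: "'a topology" and A :: "'a set" and a :: 'a
  assumes "locally_path_connected_space X"
    and "closedin X A"
    and "path_connectedin X A"
    and "\<forall>x\<in>A. countable_local_base_at X x"
    and "a \<in> A"
  shows "(pi1_top (collapse_space X A) (collapse_map A a)) closure_of
           ((\<lambda>g. loop_class (collapse_space X A) (collapse_map A a) (collapse_map A \<circ> g))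
              ` loops X a)
         = topspace (pi1_top (collapse_space X A) (collapse_map A a))"
proof -
  have "(\<lambda>g. loop_class (collapse_space X A) (collapse_map A a) (collapse_map A \<circ> g)) ` loops X a
      = loop_class (collapse_space X A) (collapse_map A a) ` ((\<circ>) (collapse_map A) ` loops X a)"
    by (simp add: image_image)
  then show ?thesis
    unfolding pi1_top_def
    using closure_of_quotient_topology_image[OF
        loop_space_top_closure_of_collapse_loops[OF assms(1,3,5)]]
    by simp
qed

end
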